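(* Let $f:\mathbb{R}^{d\times r}\to\mathbb{R}$ be a $\rho$-weakly convex function ($\rho\ge 0$), and suppose that $f$ is $L$-Lipschitz continuous on some bounded open convex set $\mathcal U\subseteq\mathbb{R}^{d\times r}$ containing $\mathcal M=\mathrm{St}(d,r)$. Then for every $\lambda\in\big(0,(\rho+3L)^{-1}\big)$, the proximal mapping $P_{\lambda f}$ is single-valued on $\mathcal M$, and for all $x,y\in\mathcal M$, $$\|P_{\lambda f}(x)-P_{\lambda f}(y)\|_F\le \frac{1}{1-\lambda(\rho+3L)}\,\|x-y\|_F .$$
   Context: $\mathcal M=\mathrm{St}(d,r)=\{x\in\mathbb{R}^{d\times r}: x^\top x=I_r\}$ with $d\ge r$, equipped with the Frobenius norm $\|\cdot\|_F$. A function $f$ is $\rho$-weakly convex if $f+\frac{\rho}{2}\|\cdot\|_F^2$ is convex. For $\lambda>0$ and $x\in\mathcal M$, the manifold Moreau envelope and proximal mapping are $f_\lambda(x)=\min_{y\in\mathcal M}\{f(y)+\frac{1}{2\lambda}\|y-x\|_F^2\}$ and $P_{\lambda f}(x)\in\arg\min_{y\in\mathcal M}\{f(y)+\frac{1}{2\lambda}\|y-x\|_F^2\}$ (a priori a set-valued mapping). *)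

theory Defs
  imports "HOL-Analysis.Analysis"
begin

text \<open>Matrices in R^(d x r) are modelled as real^'r^'d (rows indexed by 'd, columns by 'r).
  The library norm on this type is exactly the Frobenius norm.\<close>

definition frob :: "real^'r^'d \<Rightarrow> real" where
  "frob x = norm x"

definition stiefel :: "(real^'r^'d) set" where
  "stiefel = {x. transpose x ** x = mat 1}"

definition weakly_convex :: "real \<Rightarrow> (real^'r^'d \<Rightarrow> real) \<Rightarrow> bool" where
  "weakly_convex \<rho> f \<longleftrightarrow> convex_on UNIV (\<lambda>x. f x + \<rho> / 2 * (frob x)\<^sup>2)"

definition prox_set :: "real \<Rightarrow> (real^'r^'d \<Rightarrow> real) \<Rightarrow> real^'r^'d \<Rightarrow> (real^'r^'d) set" where
  "prox_set lam f x = {y \<in> stiefel. \<forall>z \<in> stiefel.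
      f y + 1 / (2 * lam) * (frob (y - x))\<^sup>2 \<le> f z + 1 / (2 * lam) * (frob (z - x))\<^sup>2}"

end

theory Submission
  imports Defs
begin

text \<open>If \<open>p\<close> minimises \<open>f + \<parallel>\<cdot> - x\<parallel>\<^sup>2 / (2\<lambda>)\<close> over the Stiefel manifold, then for every \<open>q\<close>
  on the manifold the objective at \<open>q\<close> exceeds the one at \<open>p\<close> by at least
  \<open>(1/\<lambda> - \<rho> - 3L) \<parallel>q - p\<parallel>\<^sup>2 / 2\<close>. To see this, leave \<open>p\<close> along a curve in the manifold
  whose velocity is the chord \<open>q - p\<close> up to an error \<open>\<parallel>q - p\<parallel>\<^sup>2 / 2\<close> (a Cayley transform
  of a skew-symmetric generator) and compare with the chord point \<open>(1 - t) p + t q\<close>: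
  weak convexity handles the chord point, while the Lipschitz bound and
  \<open>\<parallel>p - x\<parallel> \<le> 2\<lambda>L\<close> pay for the error term, which produces the \<open>3L\<close>; then let \<open>t \<rightarrow> 0\<close>.
  Adding the growth inequalities for \<open>(x, p)\<close> and \<open>(y, q)\<close> gives
  \<open>(1 - \<lambda>(\<rho> + 3L)) \<parallel>p - q\<parallel>\<^sup>2 \<le> \<langle>p - q, x - y\<rangle>\<close>, hence the Lipschitz bound and, for
  \<open>x = y\<close>, uniqueness; existence comes from compactness.\<close>

section \<open>Proximal points on sets with chord curves\<close>

definition prox_objective :: "real \<Rightarrow> ('a::real_normed_vector \<Rightarrow> real) \<Rightarrow> 'a \<Rightarrow> 'a \<Rightarrow> real" where
  "prox_objective lam f x y = f y + 1 / (2 * lam) * (norm (y - x))\<^sup>2"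

definition prox_on :: "'a::real_normed_vector set \<Rightarrow> real \<Rightarrow> ('a \<Rightarrow> real) \<Rightarrow> 'a \<Rightarrow> 'a set" where
  "prox_on S lam f x = {y \<in> S. \<forall>z \<in> S. prox_objective lam f x y \<le> prox_objective lam f x z}"

text \<open>The only geometric property of the Stiefel manifold used in the argument.\<close>
definition has_chord_curves :: "'a::real_normed_vector set \<Rightarrow> bool" where
  "has_chord_curves S \<longleftrightarrow> (\<forall>p \<in> S. \<forall>q \<in> S. \<exists>v C. norm (v - (q - p)) \<le> (norm (q - p))\<^sup>2 / 2 \<and>
     (\<forall>t. 0 < t \<and> t \<le> 1 \<longrightarrow> (\<exists>z \<in> S. norm (z - (p + t *\<^sub>R v)) \<le> C * t\<^sup>2)))"

lemma norm_convex_comb_sq: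
  fixes a b :: "'a::real_inner"
  shows "(norm ((1 - t) *\<^sub>R a + t *\<^sub>R b))\<^sup>2
       = (1 - t) * (norm a)\<^sup>2 + t * (norm b)\<^sup>2 - t * (1 - t) * (norm (a - b))\<^sup>2"
  unfolding power2_norm_eq_inner
  by (simp add: inner_add_left inner_add_right inner_diff_left inner_diff_right
      inner_commute algebra_simps)

lemma prox_objective_convex_comb:
  fixes f :: "'a::real_inner \<Rightarrow> real"
  assumes wc: "convex_on UNIV (\<lambda>y. f y + \<rho> / 2 * (norm y)\<^sup>2)" and t: "0 \<le> t" "t \<le> 1"
  shows "prox_objective lam f x ((1 - t) *\<^sub>R a + t *\<^sub>R b)
       \<le> (1 - t) * prox_objective lam f x a + t * prox_objective lam f x b
          - (1 / lam - \<rho>) / 2 * t * (1 - t) * (norm (a - b))\<^sup>2"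
proof -
  define w where "w = (1 - t) *\<^sub>R a + t *\<^sub>R b"
  have "w - x = (1 - t) *\<^sub>R (a - x) + t *\<^sub>R (b - x)"
    by (simp add: w_def algebra_simps)
  then have shifted: "(norm (w - x))\<^sup>2
       = (1 - t) * (norm (a - x))\<^sup>2 + t * (norm (b - x))\<^sup>2 - t * (1 - t) * (norm (a - b))\<^sup>2"
    by (simp add: norm_convex_comb_sq)
  have conv: "f w + \<rho> / 2 * (norm w)\<^sup>2
      \<le> (1 - t) * (f a + \<rho> / 2 * (norm a)\<^sup>2) + t * (f b + \<rho> / 2 * (norm b)\<^sup>2)"
    using convex_onD[OF wc, of t a b] t by (simp add: w_def)
  have nw: "(norm w)\<^sup>2
       = (1 - t) * (norm a)\<^sup>2 + t * (norm b)\<^sup>2 - t * (1 - t) * (norm (a - b))\<^sup>2"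
    by (simp add: w_def norm_convex_comb_sq)
  have "f w \<le> (1 - t) * f a + t * f b + \<rho> / 2 * t * (1 - t) * (norm (a - b))\<^sup>2"
    using conv unfolding nw by (simp add: field_simps)
  then show ?thesis
    unfolding prox_objective_def w_def[symmetric] shifted by (simp add: algebra_simps diff_divide_distrib)
qed

lemma prox_dist_le:
  fixes f :: "'a::real_normed_vector \<Rightarrow> real"
  assumes lam: "0 < lam" and lip: "L-lipschitz_on U f" and SU: "S \<subseteq> U"
    and x: "x \<in> S" and p: "p \<in> prox_on S lam f x"
  shows "norm (p - x) \<le> 2 * lam * L"
proof -
  have pS: "p \<in> S" and "prox_objective lam f x p \<le> prox_objective lam f x x"
    using p x by (auto simp: prox_on_def)
  then have "(norm (p - x))\<^sup>2 \<le> 2 * lam * (f x - f p)"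
    using lam by (simp add: prox_objective_def field_simps)
  also have "\<dots> \<le> 2 * lam * (L * norm (p - x))"
    using lipschitz_onD[OF lip, of x p] subsetD[OF SU x] subsetD[OF SU pS] lam
    by (intro mult_left_mono) (auto simp: dist_norm norm_minus_commute abs_le_iff)
  finally have "norm (p - x) * norm (p - x) \<le> (2 * lam * L) * norm (p - x)"
    by (simp add: power2_eq_square ac_simps)
  then show ?thesis
    using lam lipschitz_on_nonneg[OF lip]
    by (cases "p = x") (auto dest: mult_right_le_imp_le)
qed

lemma prox_objective_le_near_chord:
  fixes f :: "'a::real_inner \<Rightarrow> real"
  assumes U: "convex U" "S \<subseteq> U" and lip: "L-lipschitz_on U f"
    and wc: "convex_on UNIV (\<lambda>y. f y + \<rho> / 2 * (norm y)\<^sup>2)" and lam: "0 < lam"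
    and x: "x \<in> S" and p: "p \<in> prox_on S lam f x" and q: "q \<in> S" and zS: "z \<in> S"
    and t: "0 < t" "t \<le> 1" and m: "0 \<le> m"
    and zw: "norm (z - ((1 - t) *\<^sub>R p + t *\<^sub>R q)) \<le> t * m"
  shows "prox_objective lam f x p \<le> prox_objective lam f x q
      - (1 / lam - \<rho>) / 2 * (1 - t) * (norm (q - p))\<^sup>2 + 3 * L * m
      + (t * norm (q - p) * m + t * m\<^sup>2 / 2) / lam"
proof -
  let ?F = "prox_objective lam f x"
  define d where "d = norm (q - p)"
  define w where "w = (1 - t) *\<^sub>R p + t *\<^sub>R q"
  have pS: "p \<in> S" and pmin: "?F p \<le> ?F z"
    using p zS by (auto simp: prox_on_def)
  have wU: "w \<in> U"
    unfolding w_def using U pS q t by (intro convexD) auto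
  have "w - x = (p - x) + t *\<^sub>R (q - p)"
    by (simp add: w_def algebra_simps)
  then have "norm (w - x) \<le> norm (p - x) + norm (t *\<^sub>R (q - p))"
    by (metis norm_triangle_ineq)
  then have wx: "norm (w - x) \<le> 2 * lam * L + t * d"
    using prox_dist_le[OF lam lip U(2) x p] t by (simp add: d_def)
  have "f z \<le> f w + L * norm (z - w)"
    using lipschitz_onD[OF lip, of z w] subsetD[OF U(2) zS] wU by (simp add: dist_norm abs_le_iff)
  also have "\<dots> \<le> f w + L * (t * m)"
    using zw lipschitz_on_nonneg[OF lip] by (simp add: w_def mult_left_mono)
  finally have fz: "f z \<le> f w + L * (t * m)" .
  have "norm (z - x) \<le> norm (w - x) + t * m"
    using norm_triangle_ineq[of "z - w" "w - x"] zw by (simp add: w_def)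
  then have "(norm (z - x))\<^sup>2 \<le> (norm (w - x) + t * m)\<^sup>2"
    by (simp add: power_mono)
  also have "\<dots> = (norm (w - x))\<^sup>2 + 2 * (t * m) * norm (w - x) + (t * m)\<^sup>2"
    by (simp add: power2_eq_square algebra_simps)
  also have "\<dots> \<le> (norm (w - x))\<^sup>2 + 2 * (t * m) * (2 * lam * L + t * d) + (t * m)\<^sup>2"
    using wx t m by (intro add_mono mult_left_mono) auto
  finally have "1 / (2 * lam) * (norm (z - x))\<^sup>2
      \<le> 1 / (2 * lam) * ((norm (w - x))\<^sup>2 + 2 * (t * m) * (2 * lam * L + t * d) + (t * m)\<^sup>2)"
    using lam by (intro mult_left_mono) auto
  with fz have "?F z \<le> ?F w + L * (t * m)
      + 1 / (2 * lam) * (2 * (t * m) * (2 * lam * L + t * d) + (t * m)\<^sup>2)"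
    unfolding prox_objective_def by (simp add: algebra_simps)
  moreover have "?F w \<le> (1 - t) * ?F p + t * ?F q - (1 / lam - \<rho>) / 2 * t * (1 - t) * d\<^sup>2"
    using prox_objective_convex_comb[OF wc, of t lam x p q] t
    by (simp add: w_def d_def norm_minus_commute)
  moreover have "L * (t * m) + 1 / (2 * lam) * (2 * (t * m) * (2 * lam * L + t * d) + (t * m)\<^sup>2)
      = t * (3 * L * m + (t * d * m + t * m\<^sup>2 / 2) / lam)"
    using lam by (simp add: field_simps power2_eq_square)
  ultimately have "t * ?F p \<le> t * (?F q - (1 / lam - \<rho>) / 2 * (1 - t) * d\<^sup>2
      + 3 * L * m + (t * d * m + t * m\<^sup>2 / 2) / lam)"
    using pmin by (simp add: algebra_simps)
  then show ?thesis
    using t by (simp add: d_def)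
qed

lemma prox_quadratic_growth:
  fixes f :: "'a::real_inner \<Rightarrow> real"
  assumes S: "has_chord_curves S" and U: "convex U" "S \<subseteq> U" and lip: "L-lipschitz_on U f"
    and wc: "convex_on UNIV (\<lambda>y. f y + \<rho> / 2 * (norm y)\<^sup>2)" and lam: "0 < lam"
    and x: "x \<in> S" and p: "p \<in> prox_on S lam f x" and q: "q \<in> S"
  shows "prox_objective lam f x p
       \<le> prox_objective lam f x q - (1 / lam - \<rho> - 3 * L) / 2 * (norm (q - p))\<^sup>2"
proof -
  define d where "d = norm (q - p)"
  have pS: "p \<in> S"
    using p by (simp add: prox_on_def)
  obtain v C where v: "norm (v - (q - p)) \<le> d\<^sup>2 / 2"
    and curve: "\<And>t. 0 < t \<Longrightarrow> t \<le> 1 \<Longrightarrow> \<exists>z \<in> S. norm (z - (p + t *\<^sub>R v)) \<le> C * t\<^sup>2"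
    using S pS q unfolding has_chord_curves_def d_def by blast
  have C: "0 \<le> C"
    using curve[of 1] by (auto intro: order_trans[OF norm_ge_zero])
  define g where "g t = prox_objective lam f x q - (1 / lam - \<rho>) / 2 * (1 - t) * d\<^sup>2
      + 3 * L * (d\<^sup>2 / 2 + C * t) + (t * d * (d\<^sup>2 / 2 + C * t) + t * (d\<^sup>2 / 2 + C * t)\<^sup>2 / 2) / lam"
    for t
  have "prox_objective lam f x p \<le> g t" if t: "0 < t" "t \<le> 1" for t
  proof -
    obtain z where zS: "z \<in> S" and z: "norm (z - (p + t *\<^sub>R v)) \<le> C * t\<^sup>2"
      using curve[OF t] by blast
    have "z - ((1 - t) *\<^sub>R p + t *\<^sub>R q) = (z - (p + t *\<^sub>R v)) + t *\<^sub>R (v - (q - p))"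
      by (simp add: algebra_simps)
    then have "norm (z - ((1 - t) *\<^sub>R p + t *\<^sub>R q))
        \<le> norm (z - (p + t *\<^sub>R v)) + t * norm (v - (q - p))"
      using norm_triangle_ineq t by (metis abs_of_pos norm_scaleR)
    also have "\<dots> \<le> C * t\<^sup>2 + t * (d\<^sup>2 / 2)"
      using z v t by (intro add_mono mult_left_mono) auto
    also have "\<dots> = t * (d\<^sup>2 / 2 + C * t)"
      by (simp add: power2_eq_square algebra_simps)
    finally show ?thesis
      unfolding g_def d_def
      using prox_objective_le_near_chord[OF U lip wc lam x p q zS t] C t by simp
  qed
  moreover have "(g \<longlongrightarrow> g 0) (at_right 0)"
    unfolding g_def using lam by (intro tendsto_intros) (simp_all add: power2_eq_square)
  ultimately have "prox_objective lam f x p \<le> g 0"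
    by (intro tendsto_lowerbound[of g]) (auto simp: eventually_at_right_field intro!: exI[of _ 1])
  then show ?thesis
    by (simp add: g_def d_def field_simps)
qed

lemma prox_on_lipschitz:
  fixes f :: "'a::real_inner \<Rightarrow> real"
  assumes S: "has_chord_curves S" and U: "convex U" "S \<subseteq> U" and lip: "L-lipschitz_on U f"
    and wc: "convex_on UNIV (\<lambda>y. f y + \<rho> / 2 * (norm y)\<^sup>2)" and lam: "0 < lam"
    and x: "x \<in> S" and y: "y \<in> S" and p: "p \<in> prox_on S lam f x" and q: "q \<in> prox_on S lam f y"
  shows "(1 - lam * (\<rho> + 3 * L)) * norm (p - q) \<le> norm (x - y)"
proof -
  have pS: "p \<in> S" and qS: "q \<in> S"
    using p q by (auto simp: prox_on_def)
  have "prox_objective lam f x p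
      \<le> prox_objective lam f x q - (1 / lam - \<rho> - 3 * L) / 2 * (norm (p - q))\<^sup>2"
    using prox_quadratic_growth[OF S U lip wc lam x p qS] by (simp add: norm_minus_commute)
  moreover have "prox_objective lam f y q
      \<le> prox_objective lam f y p - (1 / lam - \<rho> - 3 * L) / 2 * (norm (p - q))\<^sup>2"
    by (rule prox_quadratic_growth[OF S U lip wc lam y q pS])
  moreover define E where
    "E = (norm (p - x))\<^sup>2 - (norm (q - x))\<^sup>2 + (norm (q - y))\<^sup>2 - (norm (p - y))\<^sup>2"
  ultimately have "1 / (2 * lam) * E \<le> - 2 * ((1 / lam - \<rho> - 3 * L) / 2 * (norm (p - q))\<^sup>2)"
    unfolding prox_objective_def E_def right_diff_distrib distrib_left by argo
  moreover have "E = - 2 * inner (p - q) (x - y)"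
    by (simp add: E_def power2_norm_eq_inner inner_diff_left inner_diff_right inner_commute
        algebra_simps)
  ultimately have "(1 - lam * (\<rho> + 3 * L)) * (norm (p - q))\<^sup>2 \<le> inner (p - q) (x - y)"
    using lam by (simp add: field_simps)
  also have "\<dots> \<le> norm (p - q) * norm (x - y)"
    by (rule norm_cauchy_schwarz)
  finally have "((1 - lam * (\<rho> + 3 * L)) * norm (p - q)) * norm (p - q) \<le> norm (x - y) * norm (p - q)"
    by (simp add: power2_eq_square ac_simps)
  then show ?thesis
    by (cases "p = q") (auto dest: mult_right_le_imp_le)
qed

lemma prox_on_nonempty:
  assumes "compact S" "S \<noteq> {}" "continuous_on S f"
  shows "\<exists>p. p \<in> prox_on S lam f x"
proof -
  have "continuous_on S (prox_objective lam f x)"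
    unfolding prox_objective_def by (intro continuous_intros assms(3))
  then obtain p where "p \<in> S" "\<forall>z \<in> S. prox_objective lam f x p \<le> prox_objective lam f x z"
    using continuous_attains_inf[OF assms(1,2)] by blast
  then show ?thesis
    unfolding prox_on_def by blast
qed

section \<open>Matrix algebra\<close>

lemma matrix_add_rdistrib: "(A + B) ** C = A ** C + B ** (C :: 'a::semiring_1^'p^'n)"
  by (simp add: matrix_matrix_mult_def vec_eq_iff sum.distrib distrib_right)

lemma matrix_diff_ldistrib: "A ** (B - C) = A ** B - A ** (C :: 'a::ring_1^'p^'n)"
  by (simp add: matrix_matrix_mult_def vec_eq_iff sum_subtractf right_diff_distrib)

lemma matrix_diff_rdistrib: "(A - B) ** C = A ** C - B ** (C :: 'a::ring_1^'p^'n)"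
  by (simp add: matrix_matrix_mult_def vec_eq_iff sum_subtractf left_diff_distrib)

lemma matrix_mul_uminus_left: "(- A) ** B = - (A ** (B :: 'a::ring_1^'p^'n))"
  by (simp add: matrix_matrix_mult_def vec_eq_iff sum_negf)

lemma matrix_mul_uminus_right: "A ** (- B) = - (A ** (B :: 'a::ring_1^'p^'n))"
  by (simp add: matrix_matrix_mult_def vec_eq_iff sum_negf)

lemma transpose_add: "transpose (A + B) = transpose A + transpose (B :: 'a::plus^'n^'m)"
  by (simp add: transpose_def vec_eq_iff)

lemma transpose_diff: "transpose (A - B) = transpose A - transpose (B :: 'a::minus^'n^'m)"
  by (simp add: transpose_def vec_eq_iff)

lemma matrix_mul_scaleR_right: "A ** (k *\<^sub>R B) = k *\<^sub>R (A ** (B :: real^'p^'n))"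
  by (simp add: matrix_scalar_ac scalar_matrix_assoc[symmetric])

lemma inner_matrix_mul_left:
  fixes A :: "real^'n^'m" and X :: "real^'k^'n" and Y :: "real^'k^'m"
  shows "inner (A ** X) Y = inner X (transpose A ** Y)"
proof -
  have "inner (A ** X) Y = (\<Sum>i\<in>UNIV. \<Sum>j\<in>UNIV. \<Sum>k\<in>UNIV. A$i$k * X$k$j * Y$i$j)"
    by (simp add: inner_vec_def matrix_matrix_mult_def sum_distrib_right)
  also have "\<dots> = (\<Sum>i\<in>UNIV. \<Sum>k\<in>UNIV. \<Sum>j\<in>UNIV. A$i$k * X$k$j * Y$i$j)"
    by (rule sum.cong[OF refl], rule sum.swap)
  also have "\<dots> = (\<Sum>k\<in>UNIV. \<Sum>i\<in>UNIV. \<Sum>j\<in>UNIV. A$i$k * X$k$j * Y$i$j)"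
    by (rule sum.swap)
  also have "\<dots> = (\<Sum>k\<in>UNIV. \<Sum>j\<in>UNIV. \<Sum>i\<in>UNIV. A$i$k * X$k$j * Y$i$j)"
    by (rule sum.cong[OF refl], rule sum.swap)
  also have "\<dots> = inner X (transpose A ** Y)"
    by (simp add: inner_vec_def matrix_matrix_mult_def transpose_def sum_distrib_left mult_ac)
  finally show ?thesis .
qed

lemma power2_norm_matrix: "(norm (X :: real^'k^'n))\<^sup>2 = (\<Sum>i\<in>UNIV. \<Sum>j\<in>UNIV. (X$i$j)\<^sup>2)"
  unfolding power2_norm_eq_inner inner_vec_def by (simp add: power2_eq_square)

lemma norm_transpose: "norm (transpose (X :: real^'k^'n)) = norm X"
proof -
  have "(norm (transpose X))\<^sup>2 = (norm X)\<^sup>2"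
    unfolding power2_norm_matrix by (simp add: transpose_def, rule sum.swap)
  then show ?thesis
    by (simp add: power2_eq_iff_nonneg)
qed

lemma norm_matrix_mul_le: "norm (A ** B) \<le> norm (A :: real^'n^'m) * norm (B :: real^'k^'n)"
proof -
  have row_col: "(\<Sum>k\<in>UNIV. A$i$k * B$k$j)\<^sup>2 \<le> (\<Sum>k\<in>UNIV. (A$i$k)\<^sup>2) * (\<Sum>k\<in>UNIV. (B$k$j)\<^sup>2)"
    for i j
  proof -
    have "(inner (A$i) (column j B))\<^sup>2 \<le> (norm (A$i))\<^sup>2 * (norm (column j B))\<^sup>2"
      by (metis Cauchy_Schwarz_ineq power2_norm_eq_inner)
    then show ?thesis
      unfolding power2_norm_eq_inner by (simp add: inner_vec_def column_def power2_eq_square)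
  qed
  have "(norm (A ** B))\<^sup>2 = (\<Sum>i\<in>UNIV. \<Sum>j\<in>UNIV. (\<Sum>k\<in>UNIV. A$i$k * B$k$j)\<^sup>2)"
    by (simp add: power2_norm_matrix matrix_matrix_mult_def)
  also have "\<dots> \<le> (\<Sum>i\<in>UNIV. \<Sum>j\<in>UNIV. (\<Sum>k\<in>UNIV. (A$i$k)\<^sup>2) * (\<Sum>k\<in>UNIV. (B$k$j)\<^sup>2))"
    by (intro sum_mono row_col)
  also have "\<dots> = (\<Sum>i\<in>UNIV. \<Sum>k\<in>UNIV. (A$i$k)\<^sup>2) * (\<Sum>j\<in>UNIV. \<Sum>k\<in>UNIV. (B$k$j)\<^sup>2)"
    by (rule sum_product[symmetric])
  also have "\<dots> = (norm A * norm B)\<^sup>2"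
  proof -
    have "(norm B)\<^sup>2 = (\<Sum>j\<in>UNIV. \<Sum>k\<in>UNIV. (B$k$j)\<^sup>2)"
      unfolding power2_norm_matrix by (rule sum.swap)
    then show ?thesis
      by (simp add: power2_norm_matrix power_mult_distrib)
  qed
  finally show ?thesis
    by (metis power2_le_imp_le mult_nonneg_nonneg norm_ge_zero)
qed

lemma norm_orthonormal_mul:
  fixes p :: "real^'r^'d" and S :: "real^'k^'r"
  assumes "transpose p ** p = mat 1"
  shows "norm (p ** S) = norm S"
proof -
  have "inner (p ** S) (p ** S) = inner S S"
    by (simp add: inner_matrix_mul_left matrix_mul_assoc assms)
  then show ?thesis
    by (simp add: norm_eq_sqrt_inner)
qed

lemma inner_skew_mul_self:
  fixes A :: "real^'n^'n" and X :: "real^'k^'n"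
  assumes "transpose A = - A"
  shows "inner X (A ** X) = 0"
proof -
  have "inner (A ** X) X = - inner X (A ** X)"
    using assms by (simp add: inner_matrix_mul_left matrix_mul_uminus_left)
  then show ?thesis
    by (simp add: inner_commute)
qed

lemma inner_skew_mult_vec_self:
  fixes A :: "real^'n^'n"
  assumes "transpose A = - A"
  shows "inner y (A *v y) = 0"
proof -
  have "inner (A *v y) y = inner y (transpose A *v y)"
    by (metis dot_lmul_matrix inner_commute transpose_matrix_vector)
  also have "\<dots> = - inner y (A *v y)"
    using assms by (simp add: matrix_vector_mult_def inner_vec_def sum_negf vec_eq_iff)
  finally show ?thesis
    by (simp add: inner_commute)
qed

lemma norm_le_norm_id_minus_skew_mul:
  fixes A :: "real^'n^'n" and X :: "real^'k^'n"
  assumes "transpose A = - A"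
  shows "norm X \<le> norm ((mat 1 - A) ** X)"
proof -
  have "(norm ((mat 1 - A) ** X))\<^sup>2 = (norm X)\<^sup>2 - 2 * inner X (A ** X) + (norm (A ** X))\<^sup>2"
    by (simp add: matrix_diff_rdistrib power2_norm_eq_inner inner_diff_left inner_diff_right
        inner_commute)
  then have "(norm X)\<^sup>2 \<le> (norm ((mat 1 - A) ** X))\<^sup>2"
    by (simp add: inner_skew_mul_self[OF assms])
  then show ?thesis
    by (metis power2_le_imp_le norm_ge_zero)
qed

lemma id_minus_skew_invertible:
  fixes A :: "real^'n^'n"
  assumes "transpose A = - A"
  obtains B where "B ** (mat 1 - A) = mat 1" "(mat 1 - A) ** B = mat 1"
proof -
  have "y = 0" if "(mat 1 - A) *v y = 0" for y
  proof -
    from that have "y = A *v y"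
      by (simp add: algebra_simps)
    then have "inner y y = inner y (A *v y)"
      by simp
    then show "y = 0"
      by (simp add: inner_skew_mult_vec_self[OF assms])
  qed
  then obtain B where "B ** (mat 1 - A) = mat 1"
    using matrix_left_invertible_ker by blast
  then show ?thesis
    using that matrix_left_right_inverse by blast
qed

lemma cayley_orthonormal:
  fixes A B :: "real^'n^'n"
  assumes skew: "transpose A = - A"
    and "B ** (mat 1 - A) = mat 1" "(mat 1 - A) ** B = mat 1"
  shows "transpose (B ** (mat 1 + A)) ** (B ** (mat 1 + A)) = mat 1"
proof -
  define M where "M = mat 1 - A"
  define N where "N = mat 1 + A"
  have BM: "B ** M = mat 1" and MB: "M ** B = mat 1"
    using assms(2,3) by (simp_all add: M_def)
  have tM: "transpose M = N" and tN: "transpose N = M"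
    using skew by (simp_all add: M_def N_def transpose_diff transpose_add)
  have MN: "M ** N = N ** M"
    by (simp add: M_def N_def matrix_diff_rdistrib matrix_add_rdistrib matrix_add_ldistrib
        matrix_diff_ldistrib algebra_simps)
  have "N ** transpose B = mat 1"
    using arg_cong[OF BM, of transpose] by (simp add: matrix_transpose_mul tM)
  then have tBN: "transpose B ** N = mat 1"
    using matrix_left_right_inverse by blast
  have "B ** N = B ** N ** (M ** B)"
    by (simp add: MB flip: matrix_mul_assoc)
  also have "\<dots> = B ** (M ** N) ** B"
    by (simp add: MN matrix_mul_assoc)
  finally have BN: "B ** N = N ** B"
    by (simp add: BM matrix_mul_assoc)
  have "transpose (B ** N) ** (B ** N) = transpose B ** (M ** N) ** B"
    by (simp add: BN matrix_transpose_mul tN matrix_mul_assoc)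
  also have "\<dots> = (transpose B ** N) ** (M ** B)"
    by (simp add: MN matrix_mul_assoc)
  finally have "transpose (B ** N) ** (B ** N) = mat 1"
    by (simp add: tBN MB)
  then show ?thesis
    by (simp add: N_def)
qed

section \<open>The Stiefel manifold\<close>

text \<open>The point \<open>z\<close> is the Cayley transform \<open>(I - tW/2)\<^sup>-\<^sup>1 (I + tW/2)\<close> applied to \<open>p\<close>.\<close>
lemma cayley_curve:
  fixes W :: "real^'d^'d" and p :: "real^'r^'d"
  assumes skew: "transpose W = - W" and orth: "transpose p ** p = mat 1"
  obtains z where "transpose z ** z = mat 1"
    "norm (z - (p + t *\<^sub>R (W ** p))) \<le> t\<^sup>2 / 2 * norm (W ** (W ** p))"
proof -
  define A where "A = (t / 2) *\<^sub>R W"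
  have skA: "transpose A = - A"
    using skew by (simp add: A_def transpose_scalar)
  obtain B where BM: "B ** (mat 1 - A) = mat 1" and MB: "(mat 1 - A) ** B = mat 1"
    using id_minus_skew_invertible[OF skA] by blast
  define z where "z = (B ** (mat 1 + A)) ** p"
  have "transpose z ** z = transpose p ** (transpose (B ** (mat 1 + A)) ** (B ** (mat 1 + A))) ** p"
    by (simp add: z_def matrix_transpose_mul matrix_mul_assoc)
  then have z_orth: "transpose z ** z = mat 1"
    by (simp add: cayley_orthonormal[OF skA BM MB] orth)
  have B_contr: "norm (B ** Y) \<le> norm Y" for Y :: "real^'r^'d"
    using norm_le_norm_id_minus_skew_mul[OF skA, of "B ** Y"] by (simp add: matrix_mul_assoc MB)
  have "z - (p + t *\<^sub>R (W ** p)) = B ** ((mat 1 + A) ** p) - p - 2 *\<^sub>R (A ** p)"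
    by (simp add: z_def A_def matrix_mul_assoc scalar_matrix_assoc[symmetric])
  also have "\<dots> = B ** ((mat 1 + A) ** p) - B ** ((mat 1 - A) ** p)
      - 2 *\<^sub>R (B ** ((mat 1 - A) ** (A ** p)))"
    by (simp add: matrix_mul_assoc BM)
  also have "\<dots> = B ** ((mat 1 + A) ** p - (mat 1 - A) ** p - 2 *\<^sub>R ((mat 1 - A) ** (A ** p)))"
    by (simp only: matrix_diff_ldistrib matrix_mul_scaleR_right)
  also have "(mat 1 + A) ** p - (mat 1 - A) ** p - 2 *\<^sub>R ((mat 1 - A) ** (A ** p))
      = 2 *\<^sub>R (A ** (A ** p))"
    by (simp add: matrix_add_rdistrib matrix_diff_rdistrib scaleR_2 algebra_simps)
  finally have "norm (z - (p + t *\<^sub>R (W ** p))) \<le> norm (2 *\<^sub>R (A ** (A ** p)))"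
    using B_contr by metis
  also have "2 *\<^sub>R (A ** (A ** p)) = (t\<^sup>2 / 2) *\<^sub>R (W ** (W ** p))"
    by (simp add: A_def matrix_mul_scaleR_right scalar_matrix_assoc[symmetric] power2_eq_square)
  finally show ?thesis
    using that z_orth by simp
qed

lemma skew_generator:
  fixes p v :: "real^'r^'d"
  assumes orth: "transpose p ** p = mat 1"
    and skew: "transpose (transpose p ** v) = - (transpose p ** v)"
  obtains W :: "real^'d^'d" where "transpose W = - W" "W ** p = v"
proof
  define P where "P = transpose p ** v"
  define W where "W = v ** transpose p - p ** transpose v - p ** P ** transpose p"
  have skP: "transpose P = - P"
    using skew by (simp add: P_def)
  show "transpose W = - W"
    by (simp add: W_def transpose_diff matrix_transpose_mul skP matrix_mul_assoc
        matrix_mul_uminus_left matrix_mul_uminus_right)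
  have "transpose v ** p = - P"
    using skP by (simp add: P_def matrix_transpose_mul)
  then show "W ** p = v"
    by (simp add: W_def matrix_diff_rdistrib orth matrix_mul_uminus_right P_def
        flip: matrix_mul_assoc)
qed

text \<open>Skewness of \<open>p\<^sup>T v\<close> says that \<open>v\<close> is tangent to the Stiefel manifold at \<open>p\<close>.\<close>
lemma orthonormal_chord_correction_skew:
  fixes p q :: "real^'r^'d"
  assumes op: "transpose p ** p = mat 1" and oq: "transpose q ** q = mat 1"
  defines "v \<equiv> (q - p) + (1 / 2) *\<^sub>R (p ** (transpose (q - p) ** (q - p)))"
  shows "transpose (transpose p ** v) = - (transpose p ** v)"
proof -
  define P where "P = transpose p ** q"
  define D where "D = transpose (q - p) ** (q - p)"
  have D_eq: "D = 2 *\<^sub>R mat 1 - transpose P - P"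
    by (simp add: D_def P_def transpose_diff matrix_diff_rdistrib matrix_diff_ldistrib
        matrix_transpose_mul op oq scaleR_2 algebra_simps)
  have "transpose p ** v = P - mat 1 + (1 / 2) *\<^sub>R D"
    unfolding v_def D_def[symmetric]
    by (simp add: P_def matrix_add_ldistrib matrix_diff_ldistrib matrix_mul_scaleR_right
        matrix_mul_assoc op)
  also have "\<dots> = (1 / 2) *\<^sub>R (P - transpose P)"
    unfolding D_eq by (simp add: scaleR_diff_right)
  finally have "transpose p ** v = (1 / 2) *\<^sub>R (P - transpose P)" .
  then show ?thesis
    by (simp add: transpose_scalar transpose_diff scaleR_diff_right)
qed

lemma has_chord_curves_stiefel: "has_chord_curves (stiefel :: (real^'r^'d) set)"
  unfolding has_chord_curves_def
proof (intro ballI)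
  fix p q :: "real^'r^'d"
  assume "p \<in> stiefel" "q \<in> stiefel"
  then have op: "transpose p ** p = mat 1" and oq: "transpose q ** q = mat 1"
    by (simp_all add: stiefel_def)
  define v where "v = (q - p) + (1 / 2) *\<^sub>R (p ** (transpose (q - p) ** (q - p)))"
  obtain W :: "real^'d^'d" where skew: "transpose W = - W" and Wp: "W ** p = v"
    unfolding v_def by (rule skew_generator[OF op orthonormal_chord_correction_skew[OF op oq]])
  have "norm (v - (q - p)) = norm (transpose (q - p) ** (q - p)) / 2"
    by (simp add: v_def norm_orthonormal_mul[OF op])
  also have "\<dots> \<le> (norm (q - p))\<^sup>2 / 2"
    using norm_matrix_mul_le[of "transpose (q - p)" "q - p"]
    by (simp add: norm_transpose power2_eq_square)
  finally have "norm (v - (q - p)) \<le> (norm (q - p))\<^sup>2 / 2" .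
  moreover have "\<exists>z \<in> stiefel. norm (z - (p + t *\<^sub>R v)) \<le> norm (W ** (W ** p)) / 2 * t\<^sup>2" for t
  proof -
    obtain z where "transpose z ** z = mat 1"
      and "norm (z - (p + t *\<^sub>R (W ** p))) \<le> t\<^sup>2 / 2 * norm (W ** (W ** p))"
      by (rule cayley_curve[OF skew op])
    then show ?thesis
      unfolding Wp stiefel_def by (intro bexI[of _ z]) (simp_all add: ac_simps)
  qed
  ultimately show "\<exists>v C. norm (v - (q - p)) \<le> (norm (q - p))\<^sup>2 / 2 \<and>
      (\<forall>t. 0 < t \<and> t \<le> 1 \<longrightarrow> (\<exists>z \<in> stiefel. norm (z - (p + t *\<^sub>R v)) \<le> C * t\<^sup>2))"
    by blast
qed

lemma stiefel_norm:
  assumes "(x :: real^'r^'d) \<in> stiefel"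
  shows "(norm x)\<^sup>2 = real CARD('r)"
proof -
  have "(norm x)\<^sup>2 = (\<Sum>j\<in>UNIV. \<Sum>i\<in>UNIV. x$i$j * x$i$j)"
    unfolding power2_norm_matrix by (subst sum.swap) (simp add: power2_eq_square)
  also have "\<dots> = (\<Sum>j\<in>(UNIV :: 'r set). (transpose x ** x)$j$j)"
    by (simp add: matrix_matrix_mult_def transpose_def)
  also have "\<dots> = (\<Sum>j\<in>(UNIV :: 'r set). 1)"
    using assms by (simp add: stiefel_def mat_def)
  finally show ?thesis
    by simp
qed

lemma compact_stiefel: "compact (stiefel :: (real^'r^'d) set)"
proof -
  have "closed {x :: real^'r^'d. transpose x ** x = mat 1}"
    by (intro closed_Collect_eq continuous_on_const)
      (unfold matrix_matrix_mult_def transpose_def, intro continuous_intros)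
  moreover have "bounded (stiefel :: (real^'r^'d) set)"
    unfolding bounded_iff
    by (rule exI[of _ "sqrt (real CARD('r))"]) (auto simp: stiefel_norm real_le_rsqrt)
  ultimately show ?thesis
    by (simp add: compact_eq_bounded_closed stiefel_def)
qed

theorem lemma4p1:
  fixes f :: "real^'r^'d \<Rightarrow> real" and \<rho> L lam :: real and U :: "(real^'r^'d) set"
  assumes "CARD('r) \<le> CARD('d)"
    and "\<rho> \<ge> 0"
    and "weakly_convex \<rho> f"
    and "bounded U" "open U" "convex U" "stiefel \<subseteq> U"
    and "L-lipschitz_on U f"
    and "0 < lam" "lam < 1 / (\<rho> + 3 * L)"
  shows "(\<forall>x \<in> stiefel. \<exists>!p. p \<in> prox_set lam f x) \<and>
         (\<forall>x \<in> stiefel. \<forall>y \<in> stiefel. \<forall>p \<in> prox_set lam f x. \<forall>q \<in> prox_set lam f y.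
            frob (p - q) \<le> 1 / (1 - lam * (\<rho> + 3 * L)) * frob (x - y))"
proof -
  have "0 < 1 / (\<rho> + 3 * L)"
    using assms(9,10) by linarith
  then have "0 < \<rho> + 3 * L"
    by (simp add: zero_less_divide_1_iff)
  then have gap: "0 < 1 - lam * (\<rho> + 3 * L)"
    using assms(10) by (simp add: field_simps)
  have prox_eq: "prox_set lam f x = prox_on stiefel lam f x" for x
    by (simp add: prox_set_def prox_on_def prox_objective_def frob_def)
  have contraction: "(1 - lam * (\<rho> + 3 * L)) * norm (p - q) \<le> norm (x - y)"
    if "x \<in> stiefel" "y \<in> stiefel" "p \<in> prox_set lam f x" "q \<in> prox_set lam f y" for x y p q
    using prox_on_lipschitz[OF has_chord_curves_stiefel assms(6,7,8) _ assms(9)] assms(3) that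
    by (simp add: prox_eq weakly_convex_def frob_def)
  have "continuous_on stiefel f"
    by (rule lipschitz_on_continuous_on[OF lipschitz_on_subset[OF assms(8,7)]])
  then have "\<exists>p. p \<in> prox_set lam f x" if "x \<in> stiefel" for x
    using prox_on_nonempty[OF compact_stiefel, of f lam x] that by (auto simp: prox_eq)
  moreover have "p = q" if "x \<in> stiefel" "p \<in> prox_set lam f x" "q \<in> prox_set lam f x" for x p q
    using contraction[OF that(1,1,2,3)] gap by (simp add: mult_le_0_iff)
  moreover have "frob (p - q) \<le> 1 / (1 - lam * (\<rho> + 3 * L)) * frob (x - y)"
    if "x \<in> stiefel" "y \<in> stiefel" "p \<in> prox_set lam f x" "q \<in> prox_set lam f y" for x y p q
    using contraction[OF that] gap by (simp add: frob_def field_simps)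
  ultimately show ?thesis
    by blast
qed

end
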